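(* Let $n$ be a positive integer and let $N = n^2+n+1$. Call a pair of integers $(k,x)$ a nontrivial solution for $n$ if $k \ge 1$, $x \ge 2$, $x \ne k$, $x \ne 2$, $k \ne n-1$, and \[ \sum_{j=1}^{n} j^3 + x^3 - k^3 = \left( \sum_{j=1}^{n} j + x - k \right)^2 . \] Then a nontrivial solution for $n$ exists if and only if $N$ has at least two prime factors, counted with multiplicity, that are congruent to $1 \pmod 3$.
   Context: The exclusions $x \ne k$, $x\ne 2$, $k \ne n-1$ remove the trivial solutions $(x,x)$ and $(n-1,2)$, which satisfy the identity for every $n$. "Counted with multiplicity" means: if $N=\prod p^{e_p}$, the number of such factors is $\sum_{p\equiv 1 \ (\mathrm{mod}\ 3)} e_p$. *)

theory Defs
  imports "HOL-Computational_Algebra.Primes"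
begin

definition nontrivial_solution :: "nat \<Rightarrow> int \<Rightarrow> int \<Rightarrow> bool" where
  "nontrivial_solution n k x \<longleftrightarrow>
     k \<ge> 1 \<and> x \<ge> 2 \<and> x \<noteq> k \<and> x \<noteq> 2 \<and> k \<noteq> int n - 1 \<and>
     (\<Sum>j=1..int n. j ^ 3) + x ^ 3 - k ^ 3 = ((\<Sum>j=1..int n. j) + x - k) ^ 2"

definition num_prime_factors_1mod3 :: "nat \<Rightarrow> nat" where
  "num_prime_factors_1mod3 m =
     (\<Sum>p\<in>{p \<in> prime_factors m. p mod 3 = 1}. multiplicity p m)"

end

theory Submission
  imports Defs "HOL-Number_Theory.Number_Theory"
begin

(* With S = 1 + ... + n and N = n^2 + n + 1 one has 1^3 + ... + n^3 = S^2 and 2 S = n (n + 1),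
   so the equation reads (x - k) (Q(x - 1, k + 1) - N) = 0 for the form Q(u, v) = u^2 + u v + v^2:
   nontrivial solutions correspond to representations N = Q(u, v) with u, v >= 2.

   Since Q(x, y) = (x - n y) (x + (n + 1) y) + N y^2, call a representation trivial if N divides
   one of these two linear factors. Among representations with u, v >= 1 the trivial ones are
   exactly those with u = 1 or v = 1, and as N is not a square, the symmetries of Q move every
   representation into that quadrant.

   For a nontrivial representation, N with its factor 3 removed (3 divides N at most once, and
   then both linear factors) divides the product of the linear factors but neither factor, so it
   has two prime factors; they are congruent to 1 mod 3 because n has order 3 modulo them.
   Conversely, if p q divides N for primes p, q other than 3, a pigeonhole argument gives a
   representation with N/p | x - n y and p | x + (n + 1) y. It is nontrivial: trivial
   representations are primitive, while here p or q would divide both linear factors, hence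
   x and y. *)

section \<open>The form x^2 + xy + y^2\<close>

(* The form Q of the header; it is the norm of x - y\<omega> in \<int>[\<omega>], \<omega> a primitive cube root of unity. *)
definition eisenstein_norm :: "int \<Rightarrow> int \<Rightarrow> int" where
  "eisenstein_norm x y = x^2 + x*y + y^2"

lemma eisenstein_norm_factor:
  "eisenstein_norm x y = (x - m*y) * (x + (m+1)*y) + (m^2 + m + 1) * y^2"
  by (simp add: eisenstein_norm_def algebra_simps power2_eq_square)

lemma eisenstein_norm_swap: "eisenstein_norm y x = eisenstein_norm x y"
  by (simp add: eisenstein_norm_def algebra_simps)

lemma eisenstein_norm_neg: "eisenstein_norm (-x) (-y) = eisenstein_norm x y"
  by (simp add: eisenstein_norm_def)

lemma eisenstein_norm_shear: "eisenstein_norm (x+y) (-y) = eisenstein_norm x y"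
  by (simp add: eisenstein_norm_def algebra_simps power2_eq_square)

lemma sq_plus_self_plus_1_pos: "(m::int)^2 + m + 1 > 0"
proof -
  have "4 * (m^2 + m + 1) = (2*m + 1)^2 + 3"
    by (simp add: algebra_simps power2_eq_square)
  then show ?thesis
    by (smt (verit) zero_le_power2)
qed

lemma eisenstein_norm_1_eq_iff:
  fixes m u :: int
  assumes "m \<ge> 0" "u \<ge> 0"
  shows "eisenstein_norm u 1 = m^2 + m + 1 \<longleftrightarrow> u = m"
proof -
  have "eisenstein_norm u 1 - (m^2 + m + 1) = (u - m) * (u + m + 1)"
    by (simp add: eisenstein_norm_def algebra_simps power2_eq_square)
  moreover have "u + m + 1 \<noteq> 0"
    using assms by simp
  ultimately show ?thesis
    by auto
qed

lemma eisenstein_norm_self_eq_iff: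
  fixes m u :: int
  assumes "m \<ge> 0" "u \<ge> 0"
  shows "eisenstein_norm u m = m^2 + m + 1 \<longleftrightarrow> u = 1"
proof -
  have "eisenstein_norm u m - (m^2 + m + 1) = (u - 1) * (u + m + 1)"
    by (simp add: eisenstein_norm_def algebra_simps power2_eq_square)
  moreover have "u + m + 1 \<noteq> 0"
    using assms by simp
  ultimately show ?thesis
    by auto
qed

section \<open>Reduction of the equation to a representation problem\<close>

lemma sum_Icc_int_Suc: "(\<Sum>j=1..1 + int n. f j) = (\<Sum>j=1..int n. f j) + f (1 + int n)"
  by (simp add: atLeastAtMostPlus1_int_conv add.commute)

lemma double_sum_Icc_int: "2 * (\<Sum>j=1..int n. j) = int n * (int n + 1)"
  by (induction n) (simp_all add: sum_Icc_int_Suc algebra_simps)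

lemma sum_cubes_Icc_int: "(\<Sum>j=1..int n. j^3) = (\<Sum>j=1..int n. j)^2"
proof -
  have "4 * (\<Sum>j=1..int n. j^3) = (int n * (int n + 1))^2"
    by (induction n) (simp_all add: sum_Icc_int_Suc algebra_simps power2_eq_square power3_eq_cube)
  also have "\<dots> = 4 * (\<Sum>j=1..int n. j)^2"
    unfolding double_sum_Icc_int[symmetric] by (simp add: power2_eq_square)
  finally show ?thesis
    by simp
qed

lemma solution_equation_iff:
  fixes n :: nat and k x :: int
  assumes "x \<noteq> k"
  shows "(\<Sum>j=1..int n. j^3) + x^3 - k^3 = ((\<Sum>j=1..int n. j) + x - k)^2 \<longleftrightarrow>
         eisenstein_norm (x - 1) (k + 1) = int n^2 + int n + 1"
proof -
  define S where "S = (\<Sum>j=1..int n. j)"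
  have "S^2 + x^3 - k^3 - (S + x - k)^2 =
        (x - k) * (eisenstein_norm (x - 1) (k + 1) - (int n^2 + int n + 1)) +
        (x - k) * (int n * (int n + 1) - 2 * S)"
    by (simp add: eisenstein_norm_def algebra_simps power2_eq_square power3_eq_cube)
  also have "int n * (int n + 1) - 2 * S = 0"
    unfolding S_def double_sum_Icc_int by simp
  finally show ?thesis
    using assms unfolding sum_cubes_Icc_int S_def[symmetric] by auto
qed

lemma exists_nontrivial_solution_iff:
  fixes n :: nat
  shows "(\<exists>k x. nontrivial_solution n k x) \<longleftrightarrow>
         (\<exists>u v. u \<ge> 2 \<and> v \<ge> 2 \<and> eisenstein_norm u v = int n^2 + int n + 1)"
proof
  assume "\<exists>k x. nontrivial_solution n k x"
  then obtain k x where "nontrivial_solution n k x"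
    by blast
  then show "\<exists>u v. u \<ge> 2 \<and> v \<ge> 2 \<and> eisenstein_norm u v = int n^2 + int n + 1"
    using solution_equation_iff[of x k n]
    by (intro exI[of _ "x - 1"] exI[of _ "k + 1"]) (auto simp: nontrivial_solution_def)
next
  assume "\<exists>u v. u \<ge> 2 \<and> v \<ge> 2 \<and> eisenstein_norm u v = int n^2 + int n + 1"
  then obtain u v where uv: "u \<ge> 2" "v \<ge> 2" "eisenstein_norm u v = int n^2 + int n + 1"
    by blast
  have solution: "nontrivial_solution n (b - 1) (a + 1)"
    if "a \<ge> 2" "b \<ge> 2" "a \<noteq> b - 2" "eisenstein_norm a b = int n^2 + int n + 1" for a b
  proof -
    have "b \<noteq> int n"
      using that eisenstein_norm_self_eq_iff[of "int n" a] by auto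
    with that show ?thesis
      using solution_equation_iff[of "a + 1" "b - 1" n] by (auto simp: nontrivial_solution_def)
  qed
  show "\<exists>k x. nontrivial_solution n k x"
  proof (cases "u = v - 2")
    case False
    with uv solution show ?thesis
      by blast
  next
    case True
    with uv solution[of v u] show ?thesis
      by (auto simp: eisenstein_norm_swap)
  qed
qed

section \<open>Trivial representations\<close>

lemma power2_neq_sq_plus_self_plus_1:
  fixes m z :: int
  assumes "m \<ge> 1"
  shows "z^2 \<noteq> m^2 + m + 1"
proof
  assume eq: "z^2 = m^2 + m + 1"
  show False
  proof (cases "\<bar>z\<bar> \<le> m")
    case True
    then have "z^2 \<le> m^2"
      using power_mono[of "\<bar>z\<bar>" m 2] by simp
    with eq assms show False
      by linarith
  next
    case False
    then have "(m + 1)^2 \<le> z^2"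
      using assms power_mono[of "m + 1" "\<bar>z\<bar>" 2] by simp
    with eq assms show False
      by (simp add: power2_eq_square algebra_simps)
  qed
qed

lemma rep_coord_le:
  fixes m u v :: int
  assumes "m \<ge> 0" "u \<ge> 0" "v \<ge> 1" "eisenstein_norm u v = m^2 + m + 1"
  shows "u \<le> m"
proof (rule ccontr)
  assume "\<not> u \<le> m"
  then have "(m + 1) * (m + 1) \<le> u * u" "m + 1 \<le> u * v"
    using assms mult_mono[of "m + 1" u "m + 1" u] mult_mono[of "m + 1" u 1 v] by simp_all
  moreover have "1 \<le> v * v"
    using assms mult_mono[of 1 v 1 v] by simp
  ultimately show False
    using assms(1,4) unfolding eisenstein_norm_def power2_eq_square by (simp add: algebra_simps)
qed

definition trivial_rep :: "int \<Rightarrow> int \<Rightarrow> int \<Rightarrow> bool" where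
  "trivial_rep m x y \<longleftrightarrow> (m^2 + m + 1) dvd x - m*y \<or> (m^2 + m + 1) dvd x + (m+1)*y"

lemma trivial_rep_dvd_swap:
  fixes m x y :: int
  shows "(m^2 + m + 1) dvd x + (m+1)*y \<longleftrightarrow> (m^2 + m + 1) dvd y - m*x"
proof -
  have B: "x + (m+1)*y = (m+1) * (y - m*x) + (m^2 + m + 1) * x"
    and A: "y - m*x = (m^2 + m + 1) * y - m * (x + (m+1)*y)"
    by (simp_all add: algebra_simps power2_eq_square)
  show ?thesis
  proof
    assume "(m^2 + m + 1) dvd x + (m+1)*y"
    with dvd_triv_left show "(m^2 + m + 1) dvd y - m*x"
      unfolding A by (rule dvd_diff[OF _ dvd_mult])
  next
    assume "(m^2 + m + 1) dvd y - m*x"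
    from dvd_mult[OF this] dvd_triv_left show "(m^2 + m + 1) dvd x + (m+1)*y"
      unfolding B by (rule dvd_add)
  qed
qed

lemma trivial_rep_swap: "trivial_rep m y x \<longleftrightarrow> trivial_rep m x y"
  unfolding trivial_rep_def using trivial_rep_dvd_swap[of m x y] trivial_rep_dvd_swap[of m y x]
  by blast

lemma trivial_rep_neg: "trivial_rep m (-x) (-y) \<longleftrightarrow> trivial_rep m x y"
proof -
  have "-x - m*(-y) = -(x - m*y)" "-x + (m+1)*(-y) = -(x + (m+1)*y)"
    by simp_all
  then show ?thesis
    unfolding trivial_rep_def by (simp only: dvd_minus_iff)
qed

lemma trivial_rep_shear: "trivial_rep m (x+y) (-y) \<longleftrightarrow> trivial_rep m x y"
proof -
  have "(x+y) - m*(-y) = x + (m+1)*y" "(x+y) + (m+1)*(-y) = x - m*y"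
    by (simp_all add: algebra_simps)
  then show ?thesis
    unfolding trivial_rep_def by (simp only:) blast
qed

lemma trivial_rep_imp_coprime:
  assumes "eisenstein_norm x y = m^2 + m + 1" "trivial_rep m x y"
  shows "coprime x y"
proof -
  have primitive: "coprime x y"
    if rep: "eisenstein_norm x y = m^2 + m + 1" and "(m^2 + m + 1) dvd x - m*y" for x y
  proof -
    from that(2) obtain t where t: "x - m*y = (m^2 + m + 1) * t" ..
    have "(m^2 + m + 1) * (x*t + y * ((m+1)*t + y)) =
          (x - m*y) * (x + (m+1)*y) + (m^2 + m + 1) * y^2"
      unfolding t by (simp add: algebra_simps power2_eq_square)
    also have "\<dots> = (m^2 + m + 1) * 1"
      using rep by (simp add: eisenstein_norm_factor[symmetric])
    finally have comb: "x*t + y * ((m+1)*t + y) = 1"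
      using sq_plus_self_plus_1_pos[of m] by simp
    show ?thesis
    proof (rule coprimeI)
      fix c assume "c dvd x" "c dvd y"
      then have "c dvd x*t + y * ((m+1)*t + y)"
        by simp
      then show "is_unit c"
        by (simp add: comb)
    qed
  qed
  from assms(2) consider "(m^2 + m + 1) dvd x - m*y" | "(m^2 + m + 1) dvd y - m*x"
    unfolding trivial_rep_def trivial_rep_dvd_swap by blast
  then show ?thesis
  proof cases
    case 1
    with assms(1) show ?thesis
      by (rule primitive)
  next
    case 2
    with assms(1) have "coprime y x"
      by (intro primitive) (simp_all add: eisenstein_norm_swap)
    then show ?thesis
      by (simp add: coprime_commute)
  qed
qed

lemma positive_rep_dvd_imp_eq_1:
  fixes m u v :: int
  assumes m: "m \<ge> 1" and "u \<ge> 1" "v \<ge> 1" and rep: "eisenstein_norm u v = m^2 + m + 1"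
    and dvd: "(m^2 + m + 1) dvd u - m*v"
  shows "v = 1"
proof -
  have "u \<le> m"
    using rep_coord_le[of m u v] assms by simp
  moreover have "v \<le> m"
    using rep_coord_le[of m v u] assms eisenstein_norm_swap[of u v] by simp
  moreover have "m * 1 \<le> m * v" "m * v \<le> m * m"
    using assms \<open>v \<le> m\<close> by (intro mult_left_mono; simp)+
  ultimately have bounds: "0 \<le> m*v - u" "m*v - u < m^2 + m + 1"
    using \<open>u \<ge> 1\<close> unfolding power2_eq_square by linarith+
  have "(m^2 + m + 1) dvd m*v - u"
    using dvd by (simp add: dvd_diff_commute)
  then have "m*v - u = 0"
    using bounds zdvd_not_zless[of "m*v - u" "m^2 + m + 1"] by linarith
  with \<open>u \<le> m\<close> have "m * v \<le> m * 1"
    by simp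
  with m \<open>v \<ge> 1\<close> show "v = 1"
    by simp
qed

lemma positive_rep_trivial_iff:
  fixes m u v :: int
  assumes "m \<ge> 1" "u \<ge> 1" "v \<ge> 1" and rep: "eisenstein_norm u v = m^2 + m + 1"
  shows "trivial_rep m u v \<longleftrightarrow> u = 1 \<or> v = 1"
proof
  assume "trivial_rep m u v"
  then consider "(m^2 + m + 1) dvd u - m*v" | "(m^2 + m + 1) dvd v - m*u"
    unfolding trivial_rep_def trivial_rep_dvd_swap by blast
  then show "u = 1 \<or> v = 1"
    using positive_rep_dvd_imp_eq_1[of m u v] positive_rep_dvd_imp_eq_1[of m v u] assms
      eisenstein_norm_swap[of u v] by cases auto
next
  assume "u = 1 \<or> v = 1"
  then show "trivial_rep m u v"
  proof
    assume "u = 1"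
    then have "v = m"
      using eisenstein_norm_1_eq_iff[of m v] assms eisenstein_norm_swap[of u v] by simp
    then have "u + (m+1)*v = m^2 + m + 1"
      using \<open>u = 1\<close> by (simp add: algebra_simps power2_eq_square)
    then show ?thesis
      by (simp add: trivial_rep_def)
  next
    assume "v = 1"
    then have "u = m"
      using eisenstein_norm_1_eq_iff[of m u] assms by simp
    then show ?thesis
      using \<open>v = 1\<close> by (simp add: trivial_rep_def)
  qed
qed

lemma exists_positive_in_orbit:
  fixes P :: "int \<Rightarrow> int \<Rightarrow> bool"
  assumes neg: "\<And>x y. P x y \<Longrightarrow> P (-x) (-y)"
    and swap: "\<And>x y. P x y \<Longrightarrow> P y x"
    and shear: "\<And>x y. P x y \<Longrightarrow> P (x+y) (-y)"
    and "P x y" "x \<noteq> 0" "y \<noteq> 0" "x + y \<noteq> 0"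
  shows "\<exists>u v. u > 0 \<and> v > 0 \<and> P u v"
proof -
  have opposite: "\<exists>u v. u > 0 \<and> v > 0 \<and> P u v"
    if "P x y" "x > 0" "y < 0" "x + y \<noteq> 0" for x y
  proof (cases "x + y > 0")
    case True
    with that shear show ?thesis
      by (intro exI[of _ "x+y"] exI[of _ "-y"]) auto
  next
    case False
    have "P (-(y+x)) (-(-x))"
      using neg[OF shear[OF swap[OF that(1)]]] .
    with False that show ?thesis
      by (intro exI[of _ "-(y+x)"] exI[of _ x]) auto
  qed
  consider "x > 0" "y > 0" | "x < 0" "y < 0" | "x > 0" "y < 0" | "x < 0" "y > 0"
    using assms(5,6) by linarith
  then show ?thesis
  proof cases
    case 1
    with assms(4) show ?thesis by blast
  next
    case 2
    with neg[OF assms(4)] show ?thesis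
      by (intro exI[of _ "-x"] exI[of _ "-y"]) auto
  next
    case 3
    with opposite assms(4,7) show ?thesis by blast
  next
    case 4
    with opposite[of y x] swap[OF assms(4)] assms(7) show ?thesis
      by (simp add: add.commute)
  qed
qed

lemma exists_rep_ge_2_iff_nontrivial:
  fixes m :: int
  assumes "m \<ge> 1"
  shows "(\<exists>u v. u \<ge> 2 \<and> v \<ge> 2 \<and> eisenstein_norm u v = m^2 + m + 1) \<longleftrightarrow>
         (\<exists>x y. eisenstein_norm x y = m^2 + m + 1 \<and> \<not> trivial_rep m x y)"
    (is "?ge_2 \<longleftrightarrow> (\<exists>x y. ?nontriv x y)")
proof
  assume ?ge_2
  then obtain u v where "u \<ge> 2" "v \<ge> 2" "eisenstein_norm u v = m^2 + m + 1"
    by blast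
  with positive_rep_trivial_iff[of m u v] assms show "\<exists>x y. ?nontriv x y"
    by auto
next
  assume "\<exists>x y. ?nontriv x y"
  then obtain x y where nontriv: "?nontriv x y"
    by blast
  then have rep: "eisenstein_norm x y = m^2 + m + 1"
    by simp
  have "eisenstein_norm 0 y = y^2" "eisenstein_norm x 0 = x^2" "eisenstein_norm x (-x) = x^2"
    by (simp_all add: eisenstein_norm_def power2_eq_square)
  then have "x \<noteq> 0" "y \<noteq> 0" "x + y \<noteq> 0"
    using rep power2_neq_sq_plus_self_plus_1[OF assms, of x]
      power2_neq_sq_plus_self_plus_1[OF assms, of y] by (auto simp: add_eq_0_iff)
  then have "\<exists>u v. u > 0 \<and> v > 0 \<and> ?nontriv u v"
  proof (intro exists_positive_in_orbit[where P = ?nontriv])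
    show "?nontriv y x" if "?nontriv x y" for x y
      using that eisenstein_norm_swap[of y x] trivial_rep_swap[of m y x] by simp
  qed (use nontriv in \<open>simp_all add: eisenstein_norm_neg eisenstein_norm_shear
      trivial_rep_neg trivial_rep_shear\<close>)
  then obtain u v where "u > 0" "v > 0" "?nontriv u v"
    by blast
  with positive_rep_trivial_iff[of m u v] assms show ?ge_2
    by (intro exI[of _ u] exI[of _ v]) auto
qed

section \<open>Prime factors of n^2 + n + 1\<close>

lemma prime_dvd_sq_plus_self_plus_1_mod_3:
  fixes n p :: nat
  assumes p: "prime p" and dvd: "p dvd n^2 + n + 1" and "p \<noteq> 3"
  shows "p mod 3 = 1"
proof -
  have "[n^3 + (n^2 + n + 1) = n * (n^2 + n + 1) + 1] (mod p)"
    by (simp add: power2_eq_square power3_eq_cube algebra_simps)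
  moreover have "[n^2 + n + 1 = 0] (mod p)" "[n * (n^2 + n + 1) = 0] (mod p)"
    using dvd dvd_mult[OF dvd] by (simp_all only: cong_0_iff)
  ultimately have cube: "[n^3 = 1] (mod p)"
    by (metis cong_add_lcancel_0_nat cong_add_rcancel_0_nat cong_trans cong_sym)
  then have "coprime n p"
    using cong_imp_coprime[OF cong_sym[OF cube]] by simp
  have "ord p n dvd 3"
    using cube by (simp add: ord_divides')
  then have "ord p n = 1 \<or> ord p n = 3"
    using prime_nat_iff[of 3] by auto
  then show ?thesis
  proof
    assume "ord p n = 1"
    then have "[n = 1] (mod p)"
      using ord_eq_Suc_0_iff by simp
    then have "[n^2 + n + 1 = 1^2 + 1 + 1] (mod p)"
      by (intro cong_add cong_pow cong_refl)
    then have "[n^2 + n + 1 = 3] (mod p)"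
      by (simp add: numeral_3_eq_3)
    with dvd have "p dvd 3"
      using cong_dvd_iff by blast
    with p \<open>p \<noteq> 3\<close> show ?thesis
      using primes_dvd_imp_eq[of p 3] by simp
  next
    assume "ord p n = 3"
    then have "3 dvd p - 1"
      using order_divides_totient[of p n] \<open>coprime n p\<close> p by (simp add: totient_prime ac_simps)
    with prime_ge_2_nat[OF p] show ?thesis
      by presburger
  qed
qed

lemma num_prime_factors_1mod3_ge_2_imp:
  fixes N :: nat
  assumes "N > 0" and two: "2 \<le> num_prime_factors_1mod3 N"
  shows "\<exists>p q. prime p \<and> prime q \<and> p mod 3 = 1 \<and> q mod 3 = 1 \<and> p * q dvd N"
proof -
  define S where "S = {p \<in> prime_factors N. p mod 3 = 1}"
  have count: "num_prime_factors_1mod3 N = (\<Sum>r\<in>S. multiplicity r N)"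
    by (simp add: num_prime_factors_1mod3_def S_def)
  have S_iff: "p \<in> S \<longleftrightarrow> prime p \<and> p mod 3 = 1 \<and> p dvd N" for p
    using assms(1) by (auto simp: S_def in_prime_factors_iff)
  obtain p where "p \<in> S"
    using two count by (metis le_0_eq sum.empty zero_neq_numeral ex_in_conv)
  show ?thesis
  proof (cases "S = {p}")
    case True
    then have "p^2 dvd N"
      using two count by (intro multiplicity_dvd') simp
    with \<open>p \<in> S\<close> show ?thesis
      unfolding S_iff power2_eq_square by blast
  next
    case False
    with \<open>p \<in> S\<close> obtain q where "q \<in> S" "q \<noteq> p"
      by blast
    then have "p * q dvd N"
      using \<open>p \<in> S\<close> by (simp add: S_iff divides_mult primes_coprime)
    with \<open>p \<in> S\<close> \<open>q \<in> S\<close> show ?thesis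
      unfolding S_iff by blast
  qed
qed

lemma num_prime_factors_1mod3_ge_2I:
  fixes N p q :: nat
  assumes "N > 0" and pq: "prime p" "prime q" "p mod 3 = 1" "q mod 3 = 1" "p * q dvd N"
  shows "2 \<le> num_prime_factors_1mod3 N"
proof -
  define S where "S = {p \<in> prime_factors N. p mod 3 = 1}"
  have count: "num_prime_factors_1mod3 N = (\<Sum>r\<in>S. multiplicity r N)"
    by (simp add: num_prime_factors_1mod3_def S_def)
  have "p \<in> S" "q \<in> S"
    using assms by (auto simp: S_def in_prime_factors_iff intro: dvd_mult_left dvd_mult_right)
  show ?thesis
  proof (cases "p = q")
    case True
    have "2 \<le> multiplicity p N"
      using pq assms(1) True by (intro multiplicity_geI) (auto simp: power2_eq_square)
    also have "\<dots> \<le> (\<Sum>r\<in>S. multiplicity r N)"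
      using \<open>p \<in> S\<close> by (intro member_le_sum) (auto simp: S_def)
    finally show ?thesis
      by (simp add: count)
  next
    case False
    have "1 \<le> multiplicity p N" "1 \<le> multiplicity q N"
      using pq assms(1) by (auto intro!: multiplicity_geI intro: dvd_mult_left dvd_mult_right)
    then have "2 \<le> (\<Sum>r\<in>{p, q}. multiplicity r N)"
      using False by simp
    also have "\<dots> \<le> (\<Sum>r\<in>S. multiplicity r N)"
      using \<open>p \<in> S\<close> \<open>q \<in> S\<close> by (intro sum_mono2) (auto simp: S_def)
    finally show ?thesis
      by (simp add: count)
  qed
qed

lemma ex_int_prime_pair_iff:
  fixes N :: nat
  shows "(\<exists>p q :: int. prime p \<and> prime q \<and> p \<noteq> 3 \<and> q \<noteq> 3 \<and> p * q dvd int N) \<longleftrightarrow>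
         (\<exists>p q :: nat. prime p \<and> prime q \<and> p \<noteq> 3 \<and> q \<noteq> 3 \<and> p * q dvd N)"
proof
  assume "\<exists>p q :: int. prime p \<and> prime q \<and> p \<noteq> 3 \<and> q \<noteq> 3 \<and> p * q dvd int N"
  then obtain p q :: int where pq: "prime p" "prime q" "p \<noteq> 3" "q \<noteq> 3" "p * q dvd int N"
    by blast
  moreover obtain p' q' :: nat where "p = int p'" "q = int q'"
    using pq(1,2) by (metis prime_ge_0_int nonneg_int_cases)
  ultimately show "\<exists>p q :: nat. prime p \<and> prime q \<and> p \<noteq> 3 \<and> q \<noteq> 3 \<and> p * q dvd N"
    by (auto simp flip: of_nat_mult)
next
  assume "\<exists>p q :: nat. prime p \<and> prime q \<and> p \<noteq> 3 \<and> q \<noteq> 3 \<and> p * q dvd N"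
  then obtain p q :: nat where "prime p" "prime q" "p \<noteq> 3" "q \<noteq> 3" "p * q dvd N"
    by blast
  then have "prime (int p) \<and> prime (int q) \<and> int p \<noteq> 3 \<and> int q \<noteq> 3 \<and> int p * int q dvd int N"
    by (simp flip: of_nat_mult)
  then show "\<exists>p q :: int. prime p \<and> prime q \<and> p \<noteq> 3 \<and> q \<noteq> 3 \<and> p * q dvd int N"
    by blast
qed

lemma two_prime_factors_ne_3_iff:
  fixes n :: nat
  shows "(\<exists>p q :: int. prime p \<and> prime q \<and> p \<noteq> 3 \<and> q \<noteq> 3 \<and> p * q dvd int (n^2 + n + 1)) \<longleftrightarrow>
         2 \<le> num_prime_factors_1mod3 (n^2 + n + 1)"
proof -
  have ne_3_iff: "prime p \<and> prime q \<and> p \<noteq> 3 \<and> q \<noteq> 3 \<and> p * q dvd n^2 + n + 1 \<longleftrightarrow>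
      prime p \<and> prime q \<and> p mod 3 = 1 \<and> q mod 3 = 1 \<and> p * q dvd n^2 + n + 1" for p q :: nat
    using prime_dvd_sq_plus_self_plus_1_mod_3[of p n] prime_dvd_sq_plus_self_plus_1_mod_3[of q n]
      dvd_mult_left[of p q] dvd_mult_right[of p q] by auto
  have "(\<exists>p q :: int. prime p \<and> prime q \<and> p \<noteq> 3 \<and> q \<noteq> 3 \<and> p * q dvd int (n^2 + n + 1)) \<longleftrightarrow>
        (\<exists>p q. prime p \<and> prime q \<and> p mod 3 = 1 \<and> q mod 3 = 1 \<and> p * q dvd n^2 + n + 1)"
    by (simp only: ex_int_prime_pair_iff ne_3_iff)
  also have "\<dots> \<longleftrightarrow> 2 \<le> num_prime_factors_1mod3 (n^2 + n + 1)"
    using num_prime_factors_1mod3_ge_2_imp[of "n^2 + n + 1"]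
      num_prime_factors_1mod3_ge_2I[of "n^2 + n + 1"] by simp blast
  finally show ?thesis .
qed

lemma dvd_mult_imp_two_prime_factors:
  fixes M a b :: "'a :: factorial_semiring"
  assumes "M dvd a * b" "\<not> M dvd a" "\<not> M dvd b"
  shows "\<exists>p q. prime p \<and> prime q \<and> p * q dvd M"
proof -
  have "M \<noteq> 0" "\<not> is_unit M"
    using assms by auto
  moreover have "\<not> prime_elem M"
    using assms by (auto simp: prime_elem_dvd_mult_iff)
  ultimately obtain r s where "M = r * s" "\<not> is_unit r" "\<not> is_unit s"
    by (auto simp: prime_elem_iff_irreducible irreducible_def)
  moreover from this have "r \<noteq> 0" "s \<noteq> 0"
    using \<open>M \<noteq> 0\<close> by auto
  ultimately obtain p q where "prime p" "p dvd r" "prime q" "q dvd s"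
    using prime_divisor_exists by metis
  with \<open>M = r * s\<close> show ?thesis
    using mult_dvd_mono by blast
qed

lemma rep_split_off_3:
  fixes m x y :: int
  assumes rep: "eisenstein_norm x y = m^2 + m + 1"
  obtains c M where "m^2 + m + 1 = c * M" "coprime c M" "\<not> 3 dvd M"
    "c dvd x - m*y" "c dvd x + (m+1)*y"
proof (cases "3 dvd m^2 + m + 1")
  case False
  then show ?thesis
    using that[of 1 "m^2 + m + 1"] by simp
next
  case True
  have "[m^2 + m + 1 = (m mod 3)^2 + m mod 3 + 1] (mod 3)"
    by (intro cong_add cong_pow) (auto simp: cong_def)
  with True have "[(m mod 3)^2 + m mod 3 + 1 = 0] (mod 3)"
    by (metis cong_0_iff cong_sym cong_trans)
  moreover have "m mod 3 \<in> {0, 1, 2}"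
    by auto
  ultimately have "m mod 3 = 1"
    by (auto simp: cong_def)
  then obtain k where m: "m = 3*k + 1"
    by (metis div_mod_decomp_int mult.commute)
  define M where "M = 3*k^2 + 3*k + 1"
  have N: "m^2 + m + 1 = 3 * M"
    by (simp add: m M_def algebra_simps power2_eq_square)
  have "\<not> 3 dvd M"
    unfolding M_def by (simp add: dvd_add_right_iff power2_eq_square)
  then have "coprime 3 M"
    by (simp add: prime_imp_coprime)
  have "(x - y)^2 + 3 * (x*y) = 3 * M"
    using rep N by (simp add: eisenstein_norm_def algebra_simps power2_eq_square)
  then have "3 dvd (x - y)^2"
    by (metis dvd_add_right_iff dvd_triv_left add.commute)
  then have "3 dvd x - y"
    using prime_dvd_power[of "3::int" "x - y" 2] by simp
  then have "3 dvd (x - y) - 3 * (k*y)" "3 dvd (x - y) + 3 * ((k+1)*y)"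
    by simp_all
  moreover have "x - m*y = (x - y) - 3 * (k*y)" "x + (m+1)*y = (x - y) + 3 * ((k+1)*y)"
    by (simp_all add: m algebra_simps)
  ultimately have "3 dvd x - m*y" "3 dvd x + (m+1)*y"
    by (simp_all only:)
  with N \<open>coprime 3 M\<close> \<open>\<not> 3 dvd M\<close> show ?thesis
    by (rule that)
qed

lemma nontrivial_rep_imp_two_prime_factors:
  fixes m x y :: int
  assumes rep: "eisenstein_norm x y = m^2 + m + 1" and nontriv: "\<not> trivial_rep m x y"
  shows "\<exists>p q. prime p \<and> prime q \<and> p \<noteq> 3 \<and> q \<noteq> 3 \<and> p * q dvd m^2 + m + 1"
proof -
  obtain c M where cM: "m^2 + m + 1 = c * M" "coprime c M" "\<not> 3 dvd M"
    and c: "c dvd x - m*y" "c dvd x + (m+1)*y"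
    using rep_split_off_3[OF rep] by blast
  have "(x - m*y) * (x + (m+1)*y) = (m^2 + m + 1) * (1 - y^2)"
    using rep eisenstein_norm_factor[of x y m] by (simp add: algebra_simps)
  then have "M dvd (x - m*y) * (x + (m+1)*y)"
    unfolding cM(1) by simp
  moreover have "\<not> M dvd x - m*y" "\<not> M dvd x + (m+1)*y"
    using divides_mult[OF c(1) _ cM(2)] divides_mult[OF c(2) _ cM(2)] nontriv
    unfolding trivial_rep_def cM(1) by blast+
  ultimately obtain p q where pq: "prime p" "prime q" "p * q dvd M"
    using dvd_mult_imp_two_prime_factors by blast
  moreover have "p \<noteq> 3" "q \<noteq> 3"
    using dvd_mult_left[OF pq(3)] dvd_mult_right[OF pq(3)] cM(3) by auto
  moreover have "p * q dvd m^2 + m + 1"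
    unfolding cM(1) using pq(3) by (rule dvd_mult)
  ultimately show ?thesis
    by blast
qed

section \<open>Construction of nontrivial representations\<close>

lemma eisenstein_norm_pos:
  assumes "x \<noteq> 0 \<or> y \<noteq> 0"
  shows "eisenstein_norm x y > 0"
proof -
  have "4 * eisenstein_norm x y = (2*x + y)^2 + 3*y^2"
    by (simp add: eisenstein_norm_def algebra_simps power2_eq_square)
  moreover have "(2*x + y)^2 + 3*y^2 > 0"
    using assms by (cases "y = 0") (auto simp: add_nonneg_pos)
  ultimately show ?thesis
    by simp
qed

lemma eisenstein_norm_le:
  assumes "\<bar>x\<bar> \<le> K" "\<bar>y\<bar> \<le> K"
  shows "eisenstein_norm x y \<le> 3 * K^2"
proof -
  have "x^2 \<le> K^2" "y^2 \<le> K^2"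
    using assms power_mono[of "\<bar>x\<bar>" K 2] power_mono[of "\<bar>y\<bar>" K 2] by simp_all
  moreover have "x*y \<le> K*K"
    using assms abs_mult[of x y] mult_mono[of "\<bar>x\<bar>" K "\<bar>y\<bar>" K] by simp
  ultimately show ?thesis
    by (simp add: eisenstein_norm_def power2_eq_square)
qed

lemma even_eisenstein_norm_iff: "even (eisenstein_norm x y) \<longleftrightarrow> even x \<and> even y"
  by (cases "even x"; cases "even y") (auto simp: eisenstein_norm_def power2_eq_square)

lemma eisenstein_norm_neq_double_odd:
  assumes "odd N"
  shows "eisenstein_norm x y \<noteq> 2 * N"
proof
  assume eq: "eisenstein_norm x y = 2 * N"
  then obtain x' y' where "x = 2*x'" "y = 2*y'"
    using even_eisenstein_norm_iff[of x y] by (auto elim!: evenE)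
  then have "eisenstein_norm x y = 2 * (2 * eisenstein_norm x' y')"
    by (simp add: eisenstein_norm_def power2_eq_square algebra_simps)
  with eq have "N = 2 * eisenstein_norm x' y'"
    by simp
  with assms show False
    by (metis dvd_triv_left)
qed

lemma small_solution_two_congruences:
  fixes a b d e K :: int
  assumes "d \<ge> 1" "e \<ge> 1" "K \<ge> 0" "d * e < (K + 1)^2"
  shows "\<exists>x y. (x \<noteq> 0 \<or> y \<noteq> 0) \<and> \<bar>x\<bar> \<le> K \<and> \<bar>y\<bar> \<le> K \<and> d dvd x + a*y \<and> e dvd x + b*y"
proof -
  define f where "f = (\<lambda>(s, t). ((s + a*t) mod d, (s + b*t) mod e))"
  have "\<not> inj_on f ({0..K} \<times> {0..K})"
  proof
    assume "inj_on f ({0..K} \<times> {0..K})"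
    moreover have "f ` ({0..K} \<times> {0..K}) \<subseteq> {0..<d} \<times> {0..<e}"
      using assms by (auto simp: f_def)
    ultimately have "card ({0..K} \<times> {0..K}) \<le> card ({0..<d} \<times> {0..<e})"
      by (intro card_inj_on_le) auto
    then have "nat (K + 1) * nat (K + 1) \<le> nat d * nat e"
      by (simp add: card_cartesian_product)
    then have "int (nat (K + 1) * nat (K + 1)) \<le> int (nat d * nat e)"
      by (simp only: of_nat_le_iff)
    with assms show False
      by (simp add: power2_eq_square)
  qed
  then obtain s1 t1 s2 t2 where st: "(s1, t1) \<noteq> (s2, t2)" "f (s1, t1) = f (s2, t2)"
    and range: "(s1, t1) \<in> {0..K} \<times> {0..K}" "(s2, t2) \<in> {0..K} \<times> {0..K}"
    unfolding inj_on_def by (metis prod.exhaust)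
  have "d dvd (s1 + a*t1) - (s2 + a*t2)" "e dvd (s1 + b*t1) - (s2 + b*t2)"
    using st(2) by (simp_all add: f_def mod_eq_dvd_iff)
  moreover have "(s1 + a*t1) - (s2 + a*t2) = (s1 - s2) + a*(t1 - t2)"
    "(s1 + b*t1) - (s2 + b*t2) = (s1 - s2) + b*(t1 - t2)"
    by (simp_all add: algebra_simps)
  ultimately show ?thesis
    using st(1) range by (intro exI[of _ "s1 - s2"] exI[of _ "t1 - t2"]) auto
qed

lemma rep_with_congruences:
  fixes m d e :: int
  assumes "m \<ge> 1" "d \<ge> 1" "e \<ge> 1" and N: "d * e = m^2 + m + 1"
  shows "\<exists>x y. eisenstein_norm x y = m^2 + m + 1 \<and> d dvd x - m*y \<and> e dvd x + (m+1)*y"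
proof -
  have "d * e < (m + 1)^2"
    using assms by (simp add: power2_eq_square algebra_simps)
  then obtain x y where xy: "x \<noteq> 0 \<or> y \<noteq> 0" "\<bar>x\<bar> \<le> m" "\<bar>y\<bar> \<le> m"
    and dvd: "d dvd x + (-m)*y" "e dvd x + (m+1)*y"
    using small_solution_two_congruences[of d e m "-m" "m+1"] assms by auto
  from dvd have "d dvd x - m*y"
    by simp
  from this dvd(2) have "m^2 + m + 1 dvd (x - m*y) * (x + (m+1)*y)"
    unfolding N[symmetric] by (rule mult_dvd_mono)
  then have "m^2 + m + 1 dvd eisenstein_norm x y"
    unfolding eisenstein_norm_factor[of x y m] by simp
  then obtain c where c: "eisenstein_norm x y = (m^2 + m + 1) * c" ..
  have N_pos: "m^2 + m + 1 > 0"
    by (rule sq_plus_self_plus_1_pos)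
  have "0 < (m^2 + m + 1) * c"
    using eisenstein_norm_pos[OF xy(1)] c by simp
  moreover have "(m^2 + m + 1) * c < (m^2 + m + 1) * 3"
    using eisenstein_norm_le[OF xy(2,3)] c assms(1) by (simp add: algebra_simps)
  ultimately have "0 < c" "c < 3"
    using N_pos zero_less_mult_pos[of "m^2 + m + 1" c] by (simp_all only: mult_less_cancel_left_pos)
  moreover have "c \<noteq> 2"
    using eisenstein_norm_neq_double_odd[of "m^2 + m + 1" x y] c by (auto simp: power2_eq_square)
  ultimately have "c = 1"
    by simp
  with c \<open>d dvd x - m*y\<close> dvd(2) show ?thesis
    by auto
qed

lemma common_prime_factor_imp_nontrivial:
  fixes m r x y :: int
  assumes r: "prime r" "r \<noteq> 3" "r dvd m^2 + m + 1"
    and r_dvd: "r dvd x - m*y" "r dvd x + (m+1)*y"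
    and rep: "eisenstein_norm x y = m^2 + m + 1"
  shows "\<not> trivial_rep m x y"
proof
  assume "trivial_rep m x y"
  with rep have "coprime x y"
    by (rule trivial_rep_imp_coprime)
  have "\<not> r dvd 2*m + 1"
  proof
    assume "r dvd 2*m + 1"
    have three: "4 * (m^2 + m + 1) - (2*m + 1) * (2*m + 1) = 3"
      by (simp add: algebra_simps power2_eq_square)
    have "r dvd 3"
      using \<open>r dvd 2*m + 1\<close> r(3) unfolding three[symmetric] by (intro dvd_diff dvd_mult dvd_mult2)
    then have "r = 3"
      using r(1) primes_dvd_imp_eq[of r 3] by simp
    with r(2) show False ..
  qed
  moreover have "r dvd (2*m + 1) * y"
    using dvd_diff[OF r_dvd(2) r_dvd(1)] by (simp add: algebra_simps)
  ultimately have "r dvd y"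
    using r(1) by (simp add: prime_dvd_mult_iff)
  then have "r dvd x"
    using dvd_add[OF r_dvd(1), of "m*y"] by simp
  with \<open>coprime x y\<close> have "is_unit r"
    using \<open>r dvd y\<close> by (rule coprime_common_divisor)
  with r(1) show False
    using not_prime_unit by blast
qed

lemma two_prime_factors_imp_nontrivial_rep:
  fixes m p q :: int
  assumes "m \<ge> 1" and pq: "prime p" "prime q" "p \<noteq> 3" "q \<noteq> 3" "p * q dvd m^2 + m + 1"
  shows "\<exists>x y. eisenstein_norm x y = m^2 + m + 1 \<and> \<not> trivial_rep m x y"
proof -
  obtain k where k: "m^2 + m + 1 = p * q * k"
    using pq(5) ..
  have "p > 0" "q > 0"
    using pq(1,2) by (simp_all add: prime_gt_0_int)
  moreover from this have "k > 0"
    using k sq_plus_self_plus_1_pos[of m] mult_pos_pos[of p q] zero_less_mult_pos[of "p * q" k]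
    by simp
  ultimately have "q * k \<ge> 1" "p \<ge> 1"
    using mult_pos_pos[of q k] by linarith+
  moreover have "(q * k) * p = m^2 + m + 1"
    using k by (simp add: ac_simps)
  ultimately obtain x y where rep: "eisenstein_norm x y = m^2 + m + 1"
    and A: "q * k dvd x - m*y" and B: "p dvd x + (m+1)*y"
    using rep_with_congruences[OF assms(1)] by blast
  have "p dvd m^2 + m + 1" "q dvd m^2 + m + 1"
    using pq(5) by (auto intro: dvd_mult_left dvd_mult_right)
  have "\<not> trivial_rep m x y"
  proof
    assume "trivial_rep m x y"
    then consider "m^2 + m + 1 dvd x - m*y" | "m^2 + m + 1 dvd x + (m+1)*y"
      unfolding trivial_rep_def by blast
    then show False
    proof cases
      case 1
      with \<open>p dvd m^2 + m + 1\<close> have "p dvd x - m*y"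
        by (rule dvd_trans)
      with pq(1,3) \<open>p dvd m^2 + m + 1\<close> B rep \<open>trivial_rep m x y\<close> show False
        using common_prime_factor_imp_nontrivial by blast
    next
      case 2
      with \<open>q dvd m^2 + m + 1\<close> have "q dvd x + (m+1)*y"
        by (rule dvd_trans)
      moreover have "q dvd x - m*y"
        using A by (auto intro: dvd_mult_left)
      ultimately show False
        using pq(2,4) \<open>q dvd m^2 + m + 1\<close> rep \<open>trivial_rep m x y\<close>
          common_prime_factor_imp_nontrivial by blast
    qed
  qed
  with rep show ?thesis
    by blast
qed

lemma exists_nontrivial_rep_iff_two_prime_factors:
  fixes m :: int
  assumes "m \<ge> 1"
  shows "(\<exists>x y. eisenstein_norm x y = m^2 + m + 1 \<and> \<not> trivial_rep m x y) \<longleftrightarrow>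
         (\<exists>p q. prime p \<and> prime q \<and> p \<noteq> 3 \<and> q \<noteq> 3 \<and> p * q dvd m^2 + m + 1)"
  using nontrivial_rep_imp_two_prime_factors two_prime_factors_imp_nontrivial_rep[OF assms] by blast

theorem theorem2:
  fixes n :: nat
  assumes "n \<ge> 1"
  shows "(\<exists>k x. nontrivial_solution n k x) \<longleftrightarrow>
         num_prime_factors_1mod3 (n^2 + n + 1) \<ge> 2"
proof -
  define m where "m = int n"
  have "m \<ge> 1"
    using assms by (simp add: m_def)
  have N: "int (n^2 + n + 1) = m^2 + m + 1"
    by (simp add: m_def)
  have "(\<exists>k x. nontrivial_solution n k x) \<longleftrightarrow>
        (\<exists>u v. u \<ge> 2 \<and> v \<ge> 2 \<and> eisenstein_norm u v = m^2 + m + 1)"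
    unfolding m_def by (rule exists_nontrivial_solution_iff)
  also have "\<dots> \<longleftrightarrow> (\<exists>x y. eisenstein_norm x y = m^2 + m + 1 \<and> \<not> trivial_rep m x y)"
    using \<open>m \<ge> 1\<close> by (rule exists_rep_ge_2_iff_nontrivial)
  also have "\<dots> \<longleftrightarrow> (\<exists>p q. prime p \<and> prime q \<and> p \<noteq> 3 \<and> q \<noteq> 3 \<and> p * q dvd m^2 + m + 1)"
    using \<open>m \<ge> 1\<close> by (rule exists_nontrivial_rep_iff_two_prime_factors)
  also have "\<dots> \<longleftrightarrow> 2 \<le> num_prime_factors_1mod3 (n^2 + n + 1)"
    using two_prime_factors_ne_3_iff[of n] unfolding N .
  finally show ?thesis .
qed

end
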